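(* Let $\alpha\in\mathbb{R}$ and let $\mathbb{Q}[x]^+_{x=\alpha}=\{p\in\mathbb{Q}[x]: p(\alpha)>0\}$. Suppose $\mathbb{Q}[x]^+_{x=\alpha}=H_1\sqcup H_2$ with $H_1,H_2$ disjoint nonempty subsets, each closed under addition and multiplication. Let $H_+=\{p\in\mathbb{Q}[x]^+_{x=\alpha}: p'(\alpha)>0\}$, $H_0=\{p\in\mathbb{Q}[x]^+_{x=\alpha}: p'(\alpha)=0\}$, $H_-=\{p\in\mathbb{Q}[x]^+_{x=\alpha}: p'(\alpha)<0\}$. Then either $H_1\subseteq H_+\cup H_0$ and $H_2\subseteq H_-\cup H_0$, or $H_1\subseteq H_-\cup H_0$ and $H_2\subseteq H_+\cup H_0$. *)

theory Defs
  imports "HOL-Computational_Algebra.Polynomial" Complex_Main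
begin

definition qeval :: "rat poly \<Rightarrow> real \<Rightarrow> real" where
  "qeval p a = poly (map_poly of_rat p) a"

definition Qpos_at :: "real \<Rightarrow> rat poly set" where
  "Qpos_at a = {p. qeval p a > 0}"

definition add_mult_closed :: "rat poly set \<Rightarrow> bool" where
  "add_mult_closed H \<longleftrightarrow> (\<forall>p\<in>H. \<forall>q\<in>H. p + q \<in> H \<and> p * q \<in> H)"

end

theory Submission
  imports Defs
begin

text \<open>
  Both classes are cones: they are closed under positive rational multiples, and if \<open>p\<close>
  and \<open>q\<close> lie in different classes and \<open>p - q\<close> is still positive at \<open>\<alpha>\<close>, then \<open>p - q\<close>
  lies in the class of \<open>p\<close>. Let \<open>X\<close> be the class containing \<open>1\<close>, hence all positive
  constants, and \<open>Y\<close> the other one.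

  If one class contains, for every degree \<open>n \<ge> 2\<close> and every leading coefficient,
  polynomials whose value and derivative at \<open>\<alpha>\<close> are arbitrarily small, then adding or
  subtracting them cancels leading coefficients without leaving a class. So every element of
  either class is approximated to first order at \<open>\<alpha>\<close> by a linear element of the same class.

  If \<open>Y\<close> contains no \<open>\<sigma>(x - b)\<close> with \<open>\<sigma> = \<plusminus>1\<close>, then \<open>X\<close> contains every linear polynomial
  positive at \<open>\<alpha>\<close>; products of these are small polynomials in \<open>X\<close>, and the linear
  approximation of an element of \<open>Y\<close> gives a contradiction. Otherwise \<open>Y\<close> contains
  \<open>\<sigma>(x - b)\<close> for all \<open>b\<close> on one side of \<open>\<alpha>\<close> close to \<open>\<alpha>\<close>, hence small polynomials,
  while \<open>X\<close> contains every positive \<open>-\<sigma>(x - g)\<close>. Then linear elements of \<open>Y\<close> have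
  \<open>\<sigma>p' \<ge> 0\<close>, and linear elements of \<open>X\<close> with \<open>\<sigma>p' > 0\<close> have value bounded below by a
  fixed multiple of \<open>\<sigma>p'\<close>. Linear approximation transfers the first fact to all of \<open>Y\<close>;
  applied to high powers of an element of \<open>X\<close>, whose derivative dominates their value, the
  second one shows \<open>\<sigma>p' \<le> 0\<close> on \<open>X\<close>.
\<close>

lemma map_poly_of_rat_add:
  "map_poly (of_rat :: rat \<Rightarrow> 'a::field_char_0) (p + q) = map_poly of_rat p + map_poly of_rat q"
  by (intro poly_eqI) (simp add: coeff_map_poly of_rat_add)

lemma map_poly_of_rat_diff:
  "map_poly (of_rat :: rat \<Rightarrow> 'a::field_char_0) (p - q) = map_poly of_rat p - map_poly of_rat q"
  by (intro poly_eqI) (simp add: coeff_map_poly of_rat_diff)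

lemma map_poly_of_rat_mult:
  "map_poly (of_rat :: rat \<Rightarrow> 'a::field_char_0) (p * q) = map_poly of_rat p * map_poly of_rat q"
  by (intro poly_eqI) (simp add: coeff_map_poly coeff_mult of_rat_sum of_rat_mult)

lemma qeval_add [simp]: "qeval (p + q) \<alpha> = qeval p \<alpha> + qeval q \<alpha>"
  by (simp add: qeval_def map_poly_of_rat_add)

lemma qeval_diff [simp]: "qeval (p - q) \<alpha> = qeval p \<alpha> - qeval q \<alpha>"
  by (simp add: qeval_def map_poly_of_rat_diff)

lemma qeval_mult [simp]: "qeval (p * q) \<alpha> = qeval p \<alpha> * qeval q \<alpha>"
  by (simp add: qeval_def map_poly_of_rat_mult)

lemma qeval_uminus [simp]: "qeval (- p) \<alpha> = - qeval p \<alpha>"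
  using qeval_diff[of 0 p \<alpha>] by (simp add: qeval_def)

lemma qeval_smult [simp]: "qeval (smult c p) \<alpha> = of_rat c * qeval p \<alpha>"
  by (simp add: qeval_def map_poly_smult of_rat_mult)

lemma qeval_pCons [simp]: "qeval (pCons c p) \<alpha> = of_rat c + \<alpha> * qeval p \<alpha>"
  by (simp add: qeval_def map_poly_pCons)

lemma qeval_0 [simp]: "qeval 0 \<alpha> = 0"
  by (simp add: qeval_def)

lemma qeval_1 [simp]: "qeval 1 \<alpha> = 1"
  by (simp add: qeval_def)

lemma qeval_power [simp]: "qeval (p ^ n) \<alpha> = qeval p \<alpha> ^ n"
  by (induction n) auto

lemma qeval_pderiv_mult [simp]:
  "qeval (pderiv (p * q)) \<alpha> = qeval p \<alpha> * qeval (pderiv q) \<alpha> + qeval q \<alpha> * qeval (pderiv p) \<alpha>"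
  by (simp add: pderiv_mult)

lemma power_deriv_dominates:
  assumes "qeval k \<alpha> > 0" "c * qeval (pderiv k) \<alpha> > 0"
  shows "\<exists>n. f * qeval (k ^ Suc n) \<alpha> < c * qeval (pderiv (k ^ Suc n)) \<alpha>"
proof -
  define a d where "a = qeval k \<alpha>" and "d = c * qeval (pderiv k) \<alpha>"
  have "a > 0" "d > 0"
    using assms by (simp_all add: a_def d_def)
  obtain n :: nat where "f * a / d < real n"
    using reals_Archimedean2 by blast
  then have "f * a / d < real (Suc n)"
    by simp
  then have "f * a < real (Suc n) * d"
    using \<open>d > 0\<close> by (simp add: pos_divide_less_eq)
  have deriv: "qeval (pderiv (k ^ Suc n)) \<alpha> = real (Suc n) * a ^ n * qeval (pderiv k) \<alpha>"
    by (simp only: pderiv_power_Suc qeval_mult qeval_smult qeval_power of_rat_of_nat_eq a_def)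
  have "f * qeval (k ^ Suc n) \<alpha> = f * a * a ^ n"
    by (simp add: a_def)
  also have "\<dots> < real (Suc n) * d * a ^ n"
    using \<open>f * a < real (Suc n) * d\<close> \<open>a > 0\<close> by (intro mult_strict_right_mono) simp_all
  also have "\<dots> = c * qeval (pderiv (k ^ Suc n)) \<alpha>"
    unfolding deriv d_def by (simp only: mult_ac)
  finally show ?thesis ..
qed

lemma linear_poly_eq: "degree (L :: 'a::zero poly) \<le> 1 \<Longrightarrow> L = [:coeff L 0, coeff L 1:]"
  by (intro poly_eqI) (auto simp: coeff_pCons split: nat.splits intro!: coeff_eq_0)

lemma qeval_pderiv_linear: "degree L \<le> 1 \<Longrightarrow> qeval (pderiv L) \<alpha> = of_rat (coeff L 1)"
  by (subst linear_poly_eq, assumption) (simp add: pderiv_pCons)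

definition lin :: "rat \<Rightarrow> rat \<Rightarrow> rat poly" where
  "lin \<sigma> b = [:- \<sigma> * b, \<sigma>:]"

lemma qeval_lin [simp]: "qeval (lin \<sigma> b) \<alpha> = of_rat \<sigma> * (\<alpha> - of_rat b)"
  by (simp add: lin_def of_rat_mult of_rat_minus algebra_simps)

lemma qeval_pderiv_lin [simp]: "qeval (pderiv (lin \<sigma> b)) \<alpha> = of_rat \<sigma>"
  by (simp add: lin_def pderiv_pCons)

lemma degree_lin: "degree (lin \<sigma> b) \<le> 1"
  by (simp add: lin_def)

lemma coeff_lin_1: "coeff (lin \<sigma> b) 1 = \<sigma>"
  by (simp add: lin_def)

lemma degree_lin_mult: "degree (lin \<sigma> b * lin \<tau> c) \<le> 2"
  using degree_mult_le[of "lin \<sigma> b" "lin \<tau> c"] degree_lin[of \<sigma> b] degree_lin[of \<tau> c] by simp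

lemma coeff_lin_mult_2: "coeff (lin \<sigma> b * lin \<tau> c) 2 = \<sigma> * \<tau>"
  by (simp add: lin_def numeral_2_eq_2)

lemma linear_eq_smult_lin:
  assumes "degree L \<le> 1" "coeff L 1 \<noteq> 0"
  shows "L = smult \<bar>coeff L 1\<bar> (lin (sgn (coeff L 1)) (- coeff L 0 / coeff L 1))"
proof -
  have "\<bar>coeff L 1\<bar> * sgn (coeff L 1) = coeff L 1"
    by (rule abs_mult_sgn)
  then show ?thesis
    using assms(2) by (subst linear_poly_eq[OF assms(1)]) (simp add: lin_def field_simps)
qed

lemma exists_lin_between:
  assumes "\<sigma> = 1 \<or> \<sigma> = -1" "r > 0"
  shows "\<exists>b. 0 < qeval (lin \<sigma> b) \<alpha> \<and> qeval (lin \<sigma> b) \<alpha> < r"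
  using assms(1)
proof
  assume "\<sigma> = 1"
  obtain b where "\<alpha> - r < of_rat b" "of_rat b < \<alpha>"
    using of_rat_dense[of "\<alpha> - r" \<alpha>] assms(2) by auto
  then show ?thesis using \<open>\<sigma> = 1\<close> by (intro exI[of _ b]) simp
next
  assume "\<sigma> = -1"
  obtain b where "\<alpha> < of_rat b" "of_rat b < \<alpha> + r"
    using of_rat_dense[of \<alpha> "\<alpha> + r"] assms(2) by auto
  then show ?thesis using \<open>\<sigma> = -1\<close> by (intro exI[of _ b]) (simp add: of_rat_minus)
qed

lemma lin_mult_tiny:
  assumes "\<sigma> = 1 \<or> \<sigma> = -1" "\<tau> = 1 \<or> \<tau> = -1"
    and "0 < qeval (lin \<sigma> b) \<alpha>" "qeval (lin \<sigma> b) \<alpha> < min 1 (\<delta> / 2)"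
    and "0 < qeval (lin \<tau> c) \<alpha>" "qeval (lin \<tau> c) \<alpha> < min 1 (\<delta> / 2)"
  shows "\<bar>qeval (lin \<sigma> b * lin \<tau> c) \<alpha>\<bar> < \<delta>"
    and "\<bar>qeval (pderiv (lin \<sigma> b * lin \<tau> c)) \<alpha>\<bar> < \<delta>"
proof -
  define e1 e2 where "e1 = qeval (lin \<sigma> b) \<alpha>" and "e2 = qeval (lin \<tau> c) \<alpha>"
  have e: "0 < e1" "e1 < 1" "e1 < \<delta> / 2" "0 < e2" "e2 < 1" "e2 < \<delta> / 2"
    using assms(3-6) by (auto simp: e1_def e2_def simp del: qeval_lin)
  have "qeval (lin \<sigma> b * lin \<tau> c) \<alpha> = e1 * e2"
    by (simp add: e1_def e2_def del: qeval_lin)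
  moreover have "0 < e1 * e2" "e1 * e2 < e2"
    using e by simp_all
  ultimately show "\<bar>qeval (lin \<sigma> b * lin \<tau> c) \<alpha>\<bar> < \<delta>"
    using e by (simp only: abs_of_pos)
  have "qeval (pderiv (lin \<sigma> b * lin \<tau> c)) \<alpha> = e1 * of_rat \<tau> + e2 * of_rat \<sigma>"
    by (simp add: e1_def e2_def del: qeval_lin)
  moreover have "\<bar>e1 * of_rat \<tau> + e2 * of_rat \<sigma>\<bar> \<le> e1 + e2"
    using assms(1,2) e by (auto simp: of_rat_minus)
  ultimately show "\<bar>qeval (pderiv (lin \<sigma> b * lin \<tau> c)) \<alpha>\<bar> < \<delta>"
    using e by linarith
qed

lemma lin_square_diff_tiny:
  assumes \<sigma>: "\<sigma> = 1 \<or> \<sigma> = -1"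
    and e: "0 < qeval (lin \<sigma> b) \<alpha>" "qeval (lin \<sigma> b) \<alpha> < 1"
    and c: "0 < c" "c < 1" "of_rat c < \<delta> / 2"
    and e': "0 < qeval (lin (- \<sigma>) g) \<alpha>"
      "qeval (lin (- \<sigma>) g) \<alpha> < min (\<delta> / 4) (of_rat c * qeval (lin \<sigma> b) \<alpha>)"
  defines "Q \<equiv> smult c (lin \<sigma> b) - lin (- \<sigma>) g * lin (- \<sigma>) g"
  shows "degree Q \<le> 2" "coeff Q 2 = -1" "0 < qeval Q \<alpha>" "qeval Q \<alpha> < \<delta>"
    and "\<bar>qeval (pderiv Q) \<alpha>\<bar> < \<delta>"
proof -
  show "degree Q \<le> 2"
    unfolding Q_def using degree_lin[of \<sigma> b] degree_lin_mult[of "- \<sigma>" g "- \<sigma>" g]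
    by (intro degree_diff_le) simp_all
  show "coeff Q 2 = -1"
    using coeff_lin_mult_2[of "- \<sigma>" g "- \<sigma>" g] \<sigma> degree_lin[of \<sigma> b]
    by (auto simp: Q_def coeff_eq_0)
  define e e' where "e = qeval (lin \<sigma> b) \<alpha>" and "e' = qeval (lin (- \<sigma>) g) \<alpha>"
  have "0 < e" "e < 1" "0 < e'" "e' < \<delta> / 4" "e' < of_rat c * e"
    using e e' unfolding e_def e'_def by simp_all
  have "of_rat c * e < of_rat c" "of_rat c < (1::real)"
    using \<open>0 < e\<close> \<open>e < 1\<close> c by simp_all
  then have "e' < 1"
    using \<open>e' < of_rat c * e\<close> by linarith
  then have "0 < e' * e'" "e' * e' < e'"
    using \<open>0 < e'\<close> by simp_all
  moreover have "qeval Q \<alpha> = of_rat c * e - e' * e'"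
    by (simp add: Q_def e_def e'_def del: qeval_lin)
  ultimately show "0 < qeval Q \<alpha>" "qeval Q \<alpha> < \<delta>"
    using \<open>e' < of_rat c * e\<close> \<open>of_rat c * e < of_rat c\<close> c(3) by linarith+
  have "qeval (pderiv Q) \<alpha> = of_rat \<sigma> * (of_rat c + 2 * e')"
    by (simp add: Q_def pderiv_diff pderiv_smult e'_def of_rat_minus algebra_simps del: qeval_lin)
  then show "\<bar>qeval (pderiv Q) \<alpha>\<bar> < \<delta>"
    using \<sigma> c \<open>0 < e'\<close> \<open>e' < \<delta> / 4\<close> by (auto simp: abs_mult of_rat_minus)
qed

section \<open>Tiny polynomials and linear approximation\<close>

definition tiny_polys :: "real \<Rightarrow> rat poly set \<Rightarrow> nat \<Rightarrow> bool" where
  "tiny_polys \<alpha> H n \<longleftrightarrow> (\<forall>c \<delta>. c \<noteq> 0 \<longrightarrow> \<delta> > 0 \<longrightarrow>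
     (\<exists>F\<in>H. degree F \<le> n \<and> coeff F n = c \<and> \<bar>qeval F \<alpha>\<bar> < \<delta> \<and> \<bar>qeval (pderiv F) \<alpha>\<bar> < \<delta>))"

lemma tiny_polys_uminus:
  assumes "tiny_polys \<alpha> H n"
  shows "tiny_polys \<alpha> (uminus ` H) n"
  unfolding tiny_polys_def
proof (intro allI impI)
  fix c :: rat and \<delta> :: real
  assume "c \<noteq> 0" "\<delta> > 0"
  then obtain F where "F \<in> H" "degree F \<le> n" "coeff F n = - c"
      "\<bar>qeval F \<alpha>\<bar> < \<delta>" "\<bar>qeval (pderiv F) \<alpha>\<bar> < \<delta>"
    using assms unfolding tiny_polys_def by (metis neg_equal_0_iff_equal)
  then show "\<exists>F\<in>uminus ` H. degree F \<le> n \<and> coeff F n = c \<and>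
      \<bar>qeval F \<alpha>\<bar> < \<delta> \<and> \<bar>qeval (pderiv F) \<alpha>\<bar> < \<delta>"
    by (intro bexI[of _ "- F"]) (simp_all add: pderiv_minus)
qed

lemma tiny_polys_Suc:
  assumes mult: "\<And>p q. p \<in> H \<Longrightarrow> q \<in> H \<Longrightarrow> p * q \<in> H"
    and l: "l \<in> H" "degree l \<le> 1" "coeff l 1 \<noteq> 0"
      "\<bar>qeval l \<alpha>\<bar> \<le> 1" "\<bar>qeval (pderiv l) \<alpha>\<bar> \<le> 1"
    and tiny: "tiny_polys \<alpha> H n"
  shows "tiny_polys \<alpha> H (Suc n)"
  unfolding tiny_polys_def
proof (intro allI impI)
  fix c :: rat and \<delta> :: real
  assume "c \<noteq> 0" "\<delta> > 0"
  then have "c / coeff l 1 \<noteq> 0" "\<delta> / 2 > 0"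
    using l(3) by simp_all
  then obtain F where F: "F \<in> H" "degree F \<le> n" "coeff F n = c / coeff l 1"
      "\<bar>qeval F \<alpha>\<bar> < \<delta> / 2" "\<bar>qeval (pderiv F) \<alpha>\<bar> < \<delta> / 2"
    using tiny unfolding tiny_polys_def by blast
  have "degree F = n"
    using F(2,3) \<open>c / coeff l 1 \<noteq> 0\<close> le_degree[of F n] by simp
  moreover have "degree l = 1"
    using l(2,3) le_degree by fastforce
  ultimately have "coeff (l * F) (Suc n) = c" "degree (l * F) \<le> Suc n"
    using coeff_mult_degree_sum[of l F] degree_mult_le[of l F] F(3) l(3) by simp_all
  moreover have "\<bar>qeval (l * F) \<alpha>\<bar> \<le> \<bar>qeval F \<alpha>\<bar>"
    using l(4) by (simp add: abs_mult mult_left_le_one_le)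
  then have "\<bar>qeval (l * F) \<alpha>\<bar> < \<delta>"
    using F(4) \<open>\<delta> > 0\<close> by linarith
  moreover have "\<bar>qeval (pderiv (l * F)) \<alpha>\<bar> < \<delta>"
  proof -
    have "\<bar>qeval (pderiv (l * F)) \<alpha>\<bar>
        \<le> \<bar>qeval l \<alpha>\<bar> * \<bar>qeval (pderiv F) \<alpha>\<bar> + \<bar>qeval F \<alpha>\<bar> * \<bar>qeval (pderiv l) \<alpha>\<bar>"
      by (simp add: abs_mult[symmetric] abs_triangle_ineq)
    also have "\<dots> \<le> \<bar>qeval (pderiv F) \<alpha>\<bar> + \<bar>qeval F \<alpha>\<bar>"
      using l(4,5) by (intro add_mono) (simp_all add: mult_left_le_one_le mult_right_le_one_le)
    finally show ?thesis
      using F(4,5) by linarith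
  qed
  ultimately show "\<exists>F\<in>H. degree F \<le> Suc n \<and> coeff F (Suc n) = c \<and>
      \<bar>qeval F \<alpha>\<bar> < \<delta> \<and> \<bar>qeval (pderiv F) \<alpha>\<bar> < \<delta>"
    using mult F(1) l(1) by blast
qed

lemma tiny_polys_2:
  assumes smult: "\<And>p r. p \<in> H \<Longrightarrow> r > 0 \<Longrightarrow> smult r p \<in> H"
    and unit: "\<And>c \<delta>. c = 1 \<or> c = -1 \<Longrightarrow> \<delta> > 0 \<Longrightarrow> \<exists>F\<in>H. degree F \<le> 2 \<and> coeff F 2 = c \<and>
      \<bar>qeval F \<alpha>\<bar> < \<delta> \<and> \<bar>qeval (pderiv F) \<alpha>\<bar> < \<delta>"
  shows "tiny_polys \<alpha> H 2"
  unfolding tiny_polys_def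
proof (intro allI impI)
  fix c :: rat and \<delta> :: real
  assume "c \<noteq> 0" "\<delta> > 0"
  then have r: "\<bar>c\<bar> > 0" "of_rat \<bar>c\<bar> > (0::real)" "\<delta> / of_rat \<bar>c\<bar> > 0"
    by simp_all
  moreover have "sgn c = 1 \<or> sgn c = -1"
    using \<open>c \<noteq> 0\<close> by (simp add: sgn_if)
  ultimately obtain F where F: "F \<in> H" "degree F \<le> 2" "coeff F 2 = sgn c"
      "\<bar>qeval F \<alpha>\<bar> < \<delta> / of_rat \<bar>c\<bar>" "\<bar>qeval (pderiv F) \<alpha>\<bar> < \<delta> / of_rat \<bar>c\<bar>"
    using unit by blast
  have "smult \<bar>c\<bar> F \<in> H" "degree (smult \<bar>c\<bar> F) \<le> 2" "coeff (smult \<bar>c\<bar> F) 2 = c"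
    using smult[OF F(1) r(1)] F(2,3) by (simp_all add: abs_mult_sgn)
  moreover have "\<bar>qeval (smult \<bar>c\<bar> F) \<alpha>\<bar> < \<delta>" "\<bar>qeval (pderiv (smult \<bar>c\<bar> F)) \<alpha>\<bar> < \<delta>"
    using F(4,5) r(2) by (simp_all add: pderiv_smult abs_mult pos_less_divide_eq mult.commute)
  ultimately show "\<exists>F\<in>H. degree F \<le> 2 \<and> coeff F 2 = c \<and>
      \<bar>qeval F \<alpha>\<bar> < \<delta> \<and> \<bar>qeval (pderiv F) \<alpha>\<bar> < \<delta>"
    by blast
qed

lemma tiny_polys_of_lin:
  assumes mult: "\<And>p q. p \<in> H \<Longrightarrow> q \<in> H \<Longrightarrow> p * q \<in> H"
    and smult: "\<And>p r. p \<in> H \<Longrightarrow> r > 0 \<Longrightarrow> smult r p \<in> H"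
    and \<sigma>: "\<sigma> = 1 \<or> \<sigma> = -1" and "r > 0"
    and lin: "\<And>b. 0 < qeval (lin \<sigma> b) \<alpha> \<Longrightarrow> qeval (lin \<sigma> b) \<alpha> < r \<Longrightarrow> lin \<sigma> b \<in> H"
    and neg: "\<And>\<delta>. \<delta> > 0 \<Longrightarrow> \<exists>F\<in>H. degree F \<le> 2 \<and> coeff F 2 = -1 \<and>
      \<bar>qeval F \<alpha>\<bar> < \<delta> \<and> \<bar>qeval (pderiv F) \<alpha>\<bar> < \<delta>"
    and "n \<ge> 2"
  shows "tiny_polys \<alpha> H n"
  using \<open>n \<ge> 2\<close>
proof (induction n rule: nat_induct_at_least)
  case base
  have pos: "\<exists>F\<in>H. degree F \<le> 2 \<and> coeff F 2 = 1 \<and> \<bar>qeval F \<alpha>\<bar> < \<delta> \<and> \<bar>qeval (pderiv F) \<alpha>\<bar> < \<delta>"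
    if "\<delta> > 0" for \<delta>
  proof -
    obtain b where "0 < qeval (lin \<sigma> b) \<alpha>" "qeval (lin \<sigma> b) \<alpha> < min (min 1 (\<delta> / 2)) r"
      using exists_lin_between[OF \<sigma>, of "min (min 1 (\<delta> / 2)) r"] \<open>r > 0\<close> \<open>\<delta> > 0\<close> by auto
    then have b: "0 < qeval (lin \<sigma> b) \<alpha>" "qeval (lin \<sigma> b) \<alpha> < min 1 (\<delta> / 2)" "qeval (lin \<sigma> b) \<alpha> < r"
      by simp_all
    have "lin \<sigma> b * lin \<sigma> b \<in> H"
      using mult lin b by simp
    moreover have "coeff (lin \<sigma> b * lin \<sigma> b) 2 = 1"
      using \<sigma> by (auto simp: coeff_lin_mult_2)
    ultimately show ?thesis
      using lin_mult_tiny[OF \<sigma> \<sigma> b(1,2) b(1,2)] degree_lin_mult by blast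
  qed
  show ?case
    using tiny_polys_2[of H \<alpha>] smult pos neg by blast
next
  case (Suc n)
  obtain b where b: "0 < qeval (lin \<sigma> b) \<alpha>" "qeval (lin \<sigma> b) \<alpha> < min 1 r"
    using exists_lin_between[OF \<sigma>] \<open>r > 0\<close> by (metis min_less_iff_conj zero_less_one)
  have "\<bar>qeval (pderiv (lin \<sigma> b)) \<alpha>\<bar> \<le> 1" "coeff (lin \<sigma> b) 1 \<noteq> 0"
    unfolding coeff_lin_1 using \<sigma> by (auto simp: of_rat_minus)
  with b show ?case
    using tiny_polys_Suc[OF mult, of "lin \<sigma> b"] lin degree_lin Suc.IH by simp
qed

lemma tiny_polys_of_all_lin:
  assumes mult: "\<And>p q. p \<in> H \<Longrightarrow> q \<in> H \<Longrightarrow> p * q \<in> H"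
    and smult: "\<And>p r. p \<in> H \<Longrightarrow> r > 0 \<Longrightarrow> smult r p \<in> H"
    and lin: "\<And>\<sigma> b. \<sigma> = 1 \<or> \<sigma> = -1 \<Longrightarrow> 0 < qeval (lin \<sigma> b) \<alpha> \<Longrightarrow> lin \<sigma> b \<in> H"
    and "n \<ge> 2"
  shows "tiny_polys \<alpha> H n"
proof -
  have "\<exists>F\<in>H. degree F \<le> 2 \<and> coeff F 2 = -1 \<and> \<bar>qeval F \<alpha>\<bar> < \<delta> \<and> \<bar>qeval (pderiv F) \<alpha>\<bar> < \<delta>"
    if "\<delta> > 0" for \<delta>
  proof -
    have "min 1 (\<delta> / 2) > 0"
      using that by simp
    then obtain b g where b: "0 < qeval (lin 1 b) \<alpha>" "qeval (lin 1 b) \<alpha> < min 1 (\<delta> / 2)"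
      and g: "0 < qeval (lin (-1) g) \<alpha>" "qeval (lin (-1) g) \<alpha> < min 1 (\<delta> / 2)"
      using exists_lin_between[of 1] exists_lin_between[of "-1"] by blast
    have "lin 1 b * lin (-1) g \<in> H"
      using mult lin b(1) g(1) by simp
    then show ?thesis
      using lin_mult_tiny[of 1 "-1", OF _ _ b g] degree_lin_mult coeff_lin_mult_2[of 1 b "-1" g]
      by (intro bexI[of _ "lin 1 b * lin (-1) g"]) simp_all
  qed
  then show ?thesis
    using tiny_polys_of_lin[OF mult smult, of 1 1] lin \<open>n \<ge> 2\<close> by simp
qed

context
  fixes \<alpha> :: real and Z T :: "rat poly set"
  assumes pos: "\<And>w. w \<in> Z \<Longrightarrow> qeval w \<alpha> > 0"
    and tiny: "\<And>n. n \<ge> 2 \<Longrightarrow> tiny_polys \<alpha> T n"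
    and closed: "\<And>w E. w \<in> Z \<Longrightarrow> E \<in> T \<Longrightarrow> qeval (w + E) \<alpha> > 0 \<Longrightarrow> w + E \<in> Z"
begin

lemma degree_reduction:
  assumes "w \<in> Z" "degree w \<ge> 2" "\<delta> > 0"
  shows "\<exists>w'\<in>Z. degree w' < degree w \<and> \<bar>qeval w' \<alpha> - qeval w \<alpha>\<bar> < \<delta> \<and>
      \<bar>qeval (pderiv w') \<alpha> - qeval (pderiv w) \<alpha>\<bar> < \<delta>"
proof -
  define n where "n = degree w"
  have "coeff w n \<noteq> 0"
    using assms(2) by (auto simp: n_def)
  moreover have "min \<delta> (qeval w \<alpha>) > 0"
    using assms(1,3) pos by simp
  ultimately obtain E where E: "E \<in> T" "degree E \<le> n" "coeff E n = - coeff w n"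
      "\<bar>qeval E \<alpha>\<bar> < min \<delta> (qeval w \<alpha>)" "\<bar>qeval (pderiv E) \<alpha>\<bar> < min \<delta> (qeval w \<alpha>)"
    using tiny[OF assms(2)[folded n_def]] unfolding tiny_polys_def by (metis neg_equal_0_iff_equal)
  have "qeval (w + E) \<alpha> > 0"
    using E(4) abs_ge_minus_self[of "qeval E \<alpha>"] by simp
  then have "w + E \<in> Z"
    using closed assms(1) E(1) by blast
  moreover have "coeff (w + E) k = 0" if "k \<ge> n" for k
    using that E(2,3) by (cases "k = n") (simp_all add: n_def coeff_eq_0)
  then have "degree (w + E) < degree w"
    using assms(2) by (intro degree_lessI) (simp_all add: n_def)
  ultimately show ?thesis
    using E(4,5) by (intro bexI[of _ "w + E"]) (simp_all add: pderiv_add)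
qed

lemma linear_approximation:
  "w \<in> Z \<Longrightarrow> \<epsilon> > 0 \<Longrightarrow> \<exists>L\<in>Z. degree L \<le> 1 \<and> \<bar>qeval L \<alpha> - qeval w \<alpha>\<bar> < \<epsilon> \<and>
      \<bar>qeval (pderiv L) \<alpha> - qeval (pderiv w) \<alpha>\<bar> < \<epsilon>"
proof (induction "degree w" arbitrary: w \<epsilon> rule: less_induct)
  case less
  show ?case
  proof (cases "degree w \<le> 1")
    case True
    then show ?thesis
      using less.prems by force
  next
    case False
    then obtain w' where w': "w' \<in> Z" "degree w' < degree w"
        "\<bar>qeval w' \<alpha> - qeval w \<alpha>\<bar> < \<epsilon> / 2" "\<bar>qeval (pderiv w') \<alpha> - qeval (pderiv w) \<alpha>\<bar> < \<epsilon> / 2"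
      using degree_reduction[OF less.prems(1), of "\<epsilon> / 2"] less.prems(2) by auto
    then obtain L where L: "L \<in> Z" "degree L \<le> 1"
        "\<bar>qeval L \<alpha> - qeval w' \<alpha>\<bar> < \<epsilon> / 2" "\<bar>qeval (pderiv L) \<alpha> - qeval (pderiv w') \<alpha>\<bar> < \<epsilon> / 2"
      using less.hyps[OF w'(2,1), of "\<epsilon> / 2"] less.prems(2) by auto
    have "\<bar>qeval L \<alpha> - qeval w \<alpha>\<bar> < \<epsilon>"
      using w'(3) L(3) by arith
    moreover have "\<bar>qeval (pderiv L) \<alpha> - qeval (pderiv w) \<alpha>\<bar> < \<epsilon>"
      using w'(4) L(4) by arith
    ultimately show ?thesis
      using L(1,2) by blast
  qed
qed

end

section \<open>Partitions of the polynomials positive at a point\<close>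

lemma add_mult_closed_add: "add_mult_closed A \<Longrightarrow> p \<in> A \<Longrightarrow> q \<in> A \<Longrightarrow> p + q \<in> A"
  by (simp add: add_mult_closed_def)

lemma add_mult_closed_mult: "add_mult_closed A \<Longrightarrow> p \<in> A \<Longrightarrow> q \<in> A \<Longrightarrow> p * q \<in> A"
  by (simp add: add_mult_closed_def)

lemma add_mult_closed_power: "add_mult_closed A \<Longrightarrow> p \<in> A \<Longrightarrow> p ^ Suc n \<in> A"
  by (induction n) (simp_all add: add_mult_closed_mult)

lemma add_mult_closed_smult_of_nat:
  assumes "add_mult_closed A" "p \<in> A" "n > 0"
  shows "smult (of_nat n) p \<in> A"
  using \<open>n > 0\<close>
proof (induction n rule: nat_induct_non_zero)
  case (Suc n)
  have "smult (of_nat (Suc n)) p = smult (of_nat n) p + p"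
    by (simp add: smult_add_left)
  then show ?case
    using Suc.IH add_mult_closed_add[OF assms(1) _ assms(2)] by simp
qed (use assms in simp)

locale pos_partition =
  fixes \<alpha> :: real and X Y :: "rat poly set"
  assumes Qpos_at_eq: "Qpos_at \<alpha> = X \<union> Y" and disjoint: "X \<inter> Y = {}"
    and closed_X: "add_mult_closed X" and closed_Y: "add_mult_closed Y"
begin

lemma swap: "pos_partition \<alpha> Y X"
  using Qpos_at_eq disjoint closed_X closed_Y by unfold_locales auto

lemma pos_X: "p \<in> X \<Longrightarrow> qeval p \<alpha> > 0"
  using Qpos_at_eq unfolding Qpos_at_def by blast

lemma mem_X_or_Y: "qeval p \<alpha> > 0 \<Longrightarrow> p \<in> X \<or> p \<in> Y"
  using Qpos_at_eq unfolding Qpos_at_def by blast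

lemma not_mem_Y: "p \<in> X \<Longrightarrow> p \<notin> Y"
  using disjoint by blast

lemma diff_mem_X: "p \<in> X \<Longrightarrow> q \<in> Y \<Longrightarrow> qeval (p - q) \<alpha> > 0 \<Longrightarrow> p - q \<in> X"
  using mem_X_or_Y add_mult_closed_add[OF closed_Y, of "p - q" q] not_mem_Y by fastforce

lemma smult_mem_X:
  assumes "p \<in> X" "r > 0"
  shows "smult r p \<in> X"
proof (rule ccontr)
  assume "smult r p \<notin> X"
  moreover have "qeval (smult r p) \<alpha> > 0"
    using pos_X[OF assms(1)] assms(2) by simp
  ultimately have "smult r p \<in> Y"
    using mem_X_or_Y by blast
  obtain m n where "quotient_of r = (m, n)"
    by fastforce
  then have "n > 0" "r = of_int m / of_int n"
    by (simp_all add: quotient_of_denom_pos quotient_of_div)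
  then have "m > 0"
    using \<open>r > 0\<close> by (simp add: zero_less_divide_iff)
  have "smult (of_nat (nat n)) (smult r p) = smult (of_nat (nat m)) p"
    using \<open>n > 0\<close> \<open>m > 0\<close> \<open>r = of_int m / of_int n\<close> by simp
  moreover have "smult (of_nat (nat n)) (smult r p) \<in> Y"
    using add_mult_closed_smult_of_nat[OF closed_Y \<open>smult r p \<in> Y\<close>, of "nat n"] \<open>n > 0\<close> by simp
  moreover have "smult (of_nat (nat m)) p \<in> X"
    using add_mult_closed_smult_of_nat[OF closed_X \<open>p \<in> X\<close>, of "nat m"] \<open>m > 0\<close> by simp
  ultimately show False
    using not_mem_Y by metis
qed

lemma const_mem_X: "1 \<in> X \<Longrightarrow> c > 0 \<Longrightarrow> [:c:] \<in> X"
  using smult_mem_X[of 1 c] by simp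

lemma lin_mem_X_of_linear:
  assumes "L \<in> X" "degree L \<le> 1" "coeff L 1 \<noteq> 0"
  shows "lin (sgn (coeff L 1)) (- coeff L 0 / coeff L 1) \<in> X"
proof -
  define l where "l = lin (sgn (coeff L 1)) (- coeff L 0 / coeff L 1)"
  have "smult \<bar>coeff L 1\<bar> l = L"
    using linear_eq_smult_lin[OF assms(2,3)] by (simp add: l_def)
  moreover have "smult (1 / \<bar>coeff L 1\<bar>) (smult \<bar>coeff L 1\<bar> l) = l"
    using assms(3) by simp
  ultimately have "smult (1 / \<bar>coeff L 1\<bar>) L = l"
    by simp
  then show ?thesis
    using smult_mem_X[OF assms(1), of "1 / \<bar>coeff L 1\<bar>"] assms(3) by (simp add: l_def)
qed

lemma linear_approximation_X:
  assumes "H = X \<or> H = Y" "\<And>n. n \<ge> 2 \<Longrightarrow> tiny_polys \<alpha> H n" "w \<in> X" "\<epsilon> > 0"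
  shows "\<exists>L\<in>X. degree L \<le> 1 \<and> \<bar>qeval L \<alpha> - qeval w \<alpha>\<bar> < \<epsilon> \<and>
      \<bar>qeval (pderiv L) \<alpha> - qeval (pderiv w) \<alpha>\<bar> < \<epsilon>"
  using assms(1)
proof
  assume "H = X"
  show ?thesis
    by (rule linear_approximation[OF pos_X _ _ assms(3,4)])
      (use assms(2) \<open>H = X\<close> add_mult_closed_add[OF closed_X] in auto)
next
  assume "H = Y"
  show ?thesis
    by (rule linear_approximation[of X \<alpha> "uminus ` Y", OF pos_X _ _ assms(3,4)])
      (use assms(2) \<open>H = Y\<close> tiny_polys_uminus diff_mem_X in auto)
qed

end

lemmas (in pos_partition) pos_Y = pos_partition.pos_X[OF swap]
  and diff_mem_Y = pos_partition.diff_mem_X[OF swap]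
  and smult_mem_Y = pos_partition.smult_mem_X[OF swap]
  and lin_mem_Y_of_linear = pos_partition.lin_mem_X_of_linear[OF swap]

section \<open>Signs of derivatives\<close>

locale lin_in_Y = pos_partition +
  fixes \<sigma> b\<^sub>0 :: rat
  assumes one_X: "1 \<in> X" and sign: "\<sigma> = 1 \<or> \<sigma> = -1" and lin_b\<^sub>0_Y: "lin \<sigma> b\<^sub>0 \<in> Y"
begin

lemma lin_mem_Y:
  assumes "0 < qeval (lin \<sigma> b) \<alpha>" "qeval (lin \<sigma> b) \<alpha> \<le> qeval (lin \<sigma> b\<^sub>0) \<alpha>"
  shows "lin \<sigma> b \<in> Y"
proof (cases "b = b\<^sub>0")
  case True
  then show ?thesis
    using lin_b\<^sub>0_Y by simp
next
  case False
  define c where "c = \<sigma> * (b - b\<^sub>0)"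
  have "of_rat c = qeval (lin \<sigma> b\<^sub>0) \<alpha> - qeval (lin \<sigma> b) \<alpha>"
    by (simp add: c_def of_rat_mult of_rat_diff algebra_simps)
  moreover have "c \<noteq> 0"
    using False sign by (auto simp: c_def)
  ultimately have "c > 0"
    using assms(2) by (metis diff_ge_0_iff_ge less_eq_rat_def of_rat_less_eq of_rat_0)
  moreover have "lin \<sigma> b\<^sub>0 - [:c:] = lin \<sigma> b"
    by (simp add: lin_def c_def algebra_simps)
  ultimately show ?thesis
    using diff_mem_Y[OF lin_b\<^sub>0_Y const_mem_X[OF one_X]] assms(1) by metis
qed

lemma lin_opposite_mem_X:
  assumes "0 < qeval (lin (- \<sigma>) g) \<alpha>"
  shows "lin (- \<sigma>) g \<in> X"
proof (rule ccontr)
  define c where "c = \<sigma> * (g - b\<^sub>0)"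
  have sum: "lin \<sigma> b\<^sub>0 + lin (- \<sigma>) g = [:c:]"
    by (simp add: lin_def c_def algebra_simps)
  assume "lin (- \<sigma>) g \<notin> X"
  then have "lin (- \<sigma>) g \<in> Y"
    using mem_X_or_Y assms by blast
  then have "[:c:] \<in> Y"
    using add_mult_closed_add[OF closed_Y lin_b\<^sub>0_Y] sum by metis
  moreover have "0 < qeval (lin \<sigma> b\<^sub>0 + lin (- \<sigma>) g) \<alpha>"
    using pos_Y[OF lin_b\<^sub>0_Y] assms by (simp del: qeval_lin)
  then have "c > 0"
    unfolding sum by simp
  ultimately show False
    using const_mem_X[OF one_X] not_mem_Y by blast
qed

lemma neg_quadratic_Y:
  assumes "\<delta> > 0"
  shows "\<exists>F\<in>Y. degree F \<le> 2 \<and> coeff F 2 = -1 \<and> \<bar>qeval F \<alpha>\<bar> < \<delta> \<and> \<bar>qeval (pderiv F) \<alpha>\<bar> < \<delta>"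
proof -
  have "qeval (lin \<sigma> b\<^sub>0) \<alpha> > 0"
    using pos_Y[OF lin_b\<^sub>0_Y] .
  then obtain b where b: "0 < qeval (lin \<sigma> b) \<alpha>" "qeval (lin \<sigma> b) \<alpha> < min 1 (qeval (lin \<sigma> b\<^sub>0) \<alpha>)"
    using exists_lin_between[OF sign] by (metis min_less_iff_conj zero_less_one)
  obtain c where c: "0 < c" "c < 1" "of_rat c < \<delta> / 2"
    using of_rat_dense[of 0 "min (\<delta> / 2) 1"] assms by auto
  have "- \<sigma> = 1 \<or> - \<sigma> = -1"
    using sign by auto
  moreover have "min (\<delta> / 4) (of_rat c * qeval (lin \<sigma> b) \<alpha>) > 0"
    using assms c b by simp
  ultimately obtain g where g: "0 < qeval (lin (- \<sigma>) g) \<alpha>"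
      "qeval (lin (- \<sigma>) g) \<alpha> < min (\<delta> / 4) (of_rat c * qeval (lin \<sigma> b) \<alpha>)"
    using exists_lin_between by blast
  define Q where "Q = smult c (lin \<sigma> b) - lin (- \<sigma>) g * lin (- \<sigma>) g"
  have Q: "degree Q \<le> 2" "coeff Q 2 = -1" "0 < qeval Q \<alpha>" "qeval Q \<alpha> < \<delta>"
      "\<bar>qeval (pderiv Q) \<alpha>\<bar> < \<delta>"
    using lin_square_diff_tiny[OF sign b(1) _ c g] b(2) unfolding Q_def by simp_all
  have "smult c (lin \<sigma> b) \<in> Y"
    using smult_mem_Y[OF lin_mem_Y] b c by simp
  moreover have "lin (- \<sigma>) g * lin (- \<sigma>) g \<in> X"
    using add_mult_closed_mult[OF closed_X] lin_opposite_mem_X g by blast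
  ultimately have "Q \<in> Y"
    using diff_mem_Y Q(3) unfolding Q_def by blast
  then show ?thesis
    using Q by auto
qed

lemma tiny_polys_Y: "n \<ge> 2 \<Longrightarrow> tiny_polys \<alpha> Y n"
  by (rule tiny_polys_of_lin[OF add_mult_closed_mult[OF closed_Y] smult_mem_Y sign
        pos_Y[OF lin_b\<^sub>0_Y] _ neg_quadratic_Y])
    (auto intro: lin_mem_Y)

lemma deriv_sign_linear_Y:
  assumes "L \<in> Y" "degree L \<le> 1"
  shows "0 \<le> of_rat \<sigma> * qeval (pderiv L) \<alpha>"
proof (rule ccontr)
  let ?l = "lin (- \<sigma>) (- coeff L 0 / coeff L 1)"
  assume "\<not> ?thesis"
  then have "\<sigma> * coeff L 1 < 0"
    using qeval_pderiv_linear[OF assms(2)] by (simp add: of_rat_mult[symmetric])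
  then have "coeff L 1 \<noteq> 0" "sgn (coeff L 1) = - \<sigma>"
    using sign by (auto simp: sgn_if mult_less_0_iff)
  then have "?l \<in> Y"
    using lin_mem_Y_of_linear[OF assms] by simp
  moreover have "?l \<in> X"
    using lin_opposite_mem_X pos_Y[OF \<open>?l \<in> Y\<close>] by blast
  ultimately show False
    using not_mem_Y by blast
qed

lemma deriv_sign_Y:
  assumes "v \<in> Y"
  shows "0 \<le> of_rat \<sigma> * qeval (pderiv v) \<alpha>"
proof (rule ccontr)
  define \<epsilon> where "\<epsilon> = - (of_rat \<sigma> * qeval (pderiv v) \<alpha>)"
  assume "\<not> ?thesis"
  then have "\<epsilon> > 0"
    by (simp add: \<epsilon>_def)
  then obtain L where L: "L \<in> Y" "degree L \<le> 1" "\<bar>qeval (pderiv L) \<alpha> - qeval (pderiv v) \<alpha>\<bar> < \<epsilon>"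
    using pos_partition.linear_approximation_X[OF swap, of Y] tiny_polys_Y assms by blast
  have "\<bar>of_rat \<sigma>\<bar> = (1::real)"
    using sign by (auto simp: of_rat_minus)
  then have "\<bar>of_rat \<sigma> * qeval (pderiv L) \<alpha> - of_rat \<sigma> * qeval (pderiv v) \<alpha>\<bar> < \<epsilon>"
    using L(3) by (simp add: abs_mult right_diff_distrib[symmetric])
  then have "of_rat \<sigma> * qeval (pderiv L) \<alpha> < 0"
    by (simp add: \<epsilon>_def abs_less_iff)
  then show False
    using deriv_sign_linear_Y[OF L(1,2)] by simp
qed

text \<open>Otherwise \<open>L\<close> would be a positive multiple of some \<open>\<sigma>(x - b)\<close> covered by \<open>lin_mem_Y\<close>.\<close>

lemma value_bound_linear_X:
  assumes "L \<in> X" "degree L \<le> 1" "0 < of_rat \<sigma> * qeval (pderiv L) \<alpha>"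
  shows "of_rat \<sigma> * qeval (pderiv L) \<alpha> * qeval (lin \<sigma> b\<^sub>0) \<alpha> < qeval L \<alpha>"
proof -
  define l where "l = lin \<sigma> (- coeff L 0 / coeff L 1)"
  have "\<sigma> * coeff L 1 > 0"
    using assms(3) qeval_pderiv_linear[OF assms(2)] by (simp add: of_rat_mult[symmetric])
  then have "coeff L 1 \<noteq> 0" "sgn (coeff L 1) = \<sigma>" "\<bar>coeff L 1\<bar> = \<sigma> * coeff L 1"
    using sign by (auto simp: sgn_if zero_less_mult_iff)
  then have L: "L = smult (\<sigma> * coeff L 1) l" and "l \<in> X"
    using linear_eq_smult_lin[OF assms(2)] lin_mem_X_of_linear[OF assms(1,2)] by (simp_all add: l_def)
  then have "0 < qeval l \<alpha>" "l \<notin> Y"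
    using pos_X not_mem_Y by blast+
  then have "qeval (lin \<sigma> b\<^sub>0) \<alpha> < qeval l \<alpha>"
    using lin_mem_Y unfolding l_def by force
  moreover have "of_rat \<sigma> * qeval (pderiv L) \<alpha> = of_rat (\<sigma> * coeff L 1)"
    using qeval_pderiv_linear[OF assms(2)] by (simp add: of_rat_mult)
  ultimately show ?thesis
    using assms(3) by (subst (2) L) simp
qed

lemma value_bound_X:
  assumes "K \<in> X" "0 < of_rat \<sigma> * qeval (pderiv K) \<alpha>"
  shows "of_rat \<sigma> * qeval (pderiv K) \<alpha> * qeval (lin \<sigma> b\<^sub>0) \<alpha> \<le> 4 * qeval K \<alpha>"
proof -
  define A D f where "A = qeval K \<alpha>" and "D = of_rat \<sigma> * qeval (pderiv K) \<alpha>"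
    and "f = qeval (lin \<sigma> b\<^sub>0) \<alpha>"
  have "A > 0" "D > 0" "f > 0"
    using pos_X[OF assms(1)] assms(2) pos_Y[OF lin_b\<^sub>0_Y] by (simp_all add: A_def D_def f_def)
  then obtain L where L: "L \<in> X" "degree L \<le> 1" "\<bar>qeval L \<alpha> - A\<bar> < min (D / 2) A"
      "\<bar>qeval (pderiv L) \<alpha> - qeval (pderiv K) \<alpha>\<bar> < min (D / 2) A"
    using linear_approximation_X[of Y, OF _ tiny_polys_Y assms(1), of "min (D / 2) A"]
    unfolding A_def by auto
  have "\<bar>of_rat \<sigma>\<bar> = (1::real)"
    using sign by (auto simp: of_rat_minus)
  then have "\<bar>of_rat \<sigma> * qeval (pderiv L) \<alpha> - D\<bar> < D / 2"
    using L(4) by (simp add: D_def abs_mult right_diff_distrib[symmetric])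
  then have "D / 2 < of_rat \<sigma> * qeval (pderiv L) \<alpha>"
    by arith
  then have "D / 2 * f < of_rat \<sigma> * qeval (pderiv L) \<alpha> * f"
    using \<open>f > 0\<close> by (rule mult_strict_right_mono)
  also have "\<dots> < qeval L \<alpha>"
    using value_bound_linear_X[OF L(1,2)] \<open>D / 2 < _\<close> \<open>D > 0\<close> by (simp add: f_def)
  also have "\<dots> < 2 * A"
    using L(3) by simp arith
  finally show ?thesis
    by (simp add: D_def f_def A_def)
qed

text \<open>A high power of \<open>k\<close> has derivative dominating its value, contradicting \<open>value_bound_X\<close>.\<close>

lemma deriv_sign_X:
  assumes "k \<in> X"
  shows "of_rat \<sigma> * qeval (pderiv k) \<alpha> \<le> 0"
proof (rule ccontr)
  define f where "f = qeval (lin \<sigma> b\<^sub>0) \<alpha>"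
  have "f > 0"
    using pos_Y[OF lin_b\<^sub>0_Y] by (simp add: f_def)
  assume "\<not> ?thesis"
  then have "0 < of_rat \<sigma> * qeval (pderiv k) \<alpha>"
    by simp
  then obtain n where "4 / f * qeval (k ^ Suc n) \<alpha> < of_rat \<sigma> * qeval (pderiv (k ^ Suc n)) \<alpha>"
    using power_deriv_dominates[OF pos_X[OF assms]] by blast
  moreover define K where "K = k ^ Suc n"
  ultimately have K: "4 / f * qeval K \<alpha> < of_rat \<sigma> * qeval (pderiv K) \<alpha>"
    by simp
  have "K \<in> X"
    unfolding K_def using add_mult_closed_power[OF closed_X assms] .
  have "0 < 4 / f * qeval K \<alpha>"
    using pos_X[OF \<open>K \<in> X\<close>] \<open>f > 0\<close> by simp
  then have "0 < of_rat \<sigma> * qeval (pderiv K) \<alpha>"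
    using K by linarith
  then have "of_rat \<sigma> * qeval (pderiv K) \<alpha> * f \<le> 4 * qeval K \<alpha>"
    unfolding f_def by (rule value_bound_X[OF \<open>K \<in> X\<close>])
  moreover have "4 / f * qeval K \<alpha> * f < of_rat \<sigma> * qeval (pderiv K) \<alpha> * f"
    using K \<open>f > 0\<close> by (rule mult_strict_right_mono)
  ultimately show False
    using \<open>f > 0\<close> by simp
qed

end

lemma (in pos_partition) lin_mem_Y_exists:
  assumes one_X: "1 \<in> X" and "Y \<noteq> {}"
  shows "\<exists>\<sigma> b. (\<sigma> = 1 \<or> \<sigma> = -1) \<and> lin \<sigma> b \<in> Y"
proof (rule ccontr)
  assume no_lin: "\<not> ?thesis"
  have lin_X: "lin \<sigma> b \<in> X" if "\<sigma> = 1 \<or> \<sigma> = -1" "0 < qeval (lin \<sigma> b) \<alpha>" for \<sigma> b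
    using no_lin that mem_X_or_Y by blast
  have tiny: "tiny_polys \<alpha> X n" if "n \<ge> 2" for n
    using tiny_polys_of_all_lin[OF add_mult_closed_mult[OF closed_X] smult_mem_X lin_X that] .
  obtain h where "h \<in> Y"
    using \<open>Y \<noteq> {}\<close> by blast
  then obtain L where L: "L \<in> Y" "degree L \<le> 1"
    using pos_partition.linear_approximation_X[OF swap, of X, OF _ tiny, of h 1] by auto
  show False
  proof (cases "coeff L 1 = 0")
    case True
    then have "L = [:coeff L 0:]"
      using linear_poly_eq[OF L(2)] by simp
    moreover have "coeff L 0 > 0"
      using pos_Y[OF L(1)] by (subst (asm) calculation) simp
    ultimately show False
      using const_mem_X[OF one_X] L(1) not_mem_Y by metis
  next
    case False
    then have "sgn (coeff L 1) = 1 \<or> sgn (coeff L 1) = -1"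
      by (simp add: sgn_if)
    then show False
      using lin_mem_Y_of_linear[OF L False] no_lin by blast
  qed
qed

lemma (in pos_partition) deriv_sign_separation:
  assumes "X \<noteq> {}" "Y \<noteq> {}"
  shows "((\<forall>p\<in>X. 0 \<le> qeval (pderiv p) \<alpha>) \<and> (\<forall>p\<in>Y. qeval (pderiv p) \<alpha> \<le> 0)) \<or>
    ((\<forall>p\<in>X. qeval (pderiv p) \<alpha> \<le> 0) \<and> (\<forall>p\<in>Y. 0 \<le> qeval (pderiv p) \<alpha>))"
proof -
  have sep: "((\<forall>p\<in>X'. 0 \<le> qeval (pderiv p) \<alpha>) \<and> (\<forall>p\<in>Y'. qeval (pderiv p) \<alpha> \<le> 0)) \<or>
      ((\<forall>p\<in>X'. qeval (pderiv p) \<alpha> \<le> 0) \<and> (\<forall>p\<in>Y'. 0 \<le> qeval (pderiv p) \<alpha>))"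
    if part: "pos_partition \<alpha> X' Y'" and one: "1 \<in> X'" and "Y' \<noteq> {}" for X' Y'
  proof -
    obtain \<sigma> b where "\<sigma> = 1 \<or> \<sigma> = -1" "lin \<sigma> b \<in> Y'"
      using pos_partition.lin_mem_Y_exists[OF part one \<open>Y' \<noteq> {}\<close>] by blast
    then interpret lin_in_Y \<alpha> X' Y' \<sigma> b
      using part one by (simp add: lin_in_Y_def lin_in_Y_axioms_def)
    show ?thesis
      using sign deriv_sign_X deriv_sign_Y by (auto simp: of_rat_minus)
  qed
  have "1 \<in> X \<or> 1 \<in> Y"
    using mem_X_or_Y[of 1] by simp
  then show ?thesis
    using sep[OF pos_partition_axioms _ assms(2)] sep[OF swap _ assms(1)] by blast
qed

theorem proposition4p1:
  fixes \<alpha> :: real and H1 H2 :: "rat poly set"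
  assumes "Qpos_at \<alpha> = H1 \<union> H2"
    and "H1 \<inter> H2 = {}"
    and "H1 \<noteq> {}" and "H2 \<noteq> {}"
    and "add_mult_closed H1" and "add_mult_closed H2"
  defines "Hp \<equiv> {p \<in> Qpos_at \<alpha>. qeval (pderiv p) \<alpha> > 0}"
    and "H0 \<equiv> {p \<in> Qpos_at \<alpha>. qeval (pderiv p) \<alpha> = 0}"
    and "Hm \<equiv> {p \<in> Qpos_at \<alpha>. qeval (pderiv p) \<alpha> < 0}"
  shows "(H1 \<subseteq> Hp \<union> H0 \<and> H2 \<subseteq> Hm \<union> H0) \<or> (H1 \<subseteq> Hm \<union> H0 \<and> H2 \<subseteq> Hp \<union> H0)"
proof -
  interpret pos_partition \<alpha> H1 H2
    using assms(1,2,5,6) by unfold_locales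
  have "H1 \<subseteq> Qpos_at \<alpha>" "H2 \<subseteq> Qpos_at \<alpha>"
    using assms(1) by auto
  then show ?thesis
    using deriv_sign_separation[OF assms(3,4)] unfolding Hp_def H0_def Hm_def by fastforce
qed

end
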